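(* Let $G,H$ be graphs with $H$ connected and let $b$ be a positive integer. Consider the $(H,b)$ deletion algorithm: starting from $G_0=G$, as long as possible obtain $G_{i+1}$ from $G_i$ by deleting, arbitrarily, either a bad vertex, a bad edge, a bad set, or (the vertex set of) a small component, all defined with respect to the current graph $G_i$ and the fixed $H,b$. Then, regardless of the arbitrary choices made, the algorithm terminates with the $(H,b)$-core of $G$. In particular the $(H,b)$-core of $G$ is $(H,b)$-stable.
   Context: With respect to a graph $F$, a connected graph $H$ and a positive integer $b$: a bad vertex is a vertex of $F$ lying in no copy of $H$ in $F$; a bad edge is an edge of $F$ lying in no copy of $H$ in $F$; a bad set is a set $U\subseteq V(F)$ with $2\le|U|\le b+1$ such that no copy $\hat H$ of $H$ in $F$ satisfies $|V(\hat H)\cap U|=1$; a small component is a connected component of $F$ with at most $(b+1)(v(H)-1)$ vertices. A graph is $(H,b)$-stable if none of these four exist in it. The $(H,b)$-core of $G$ is the union of all $(H,b)$-stable subgraphs of $G$. *)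

theory Defs
  imports Main
begin

text \<open>Finite simple graphs: a vertex set and a set of 2-element edges.\<close>
type_synonym 'a graph = "'a set \<times> 'a set set"

definition verts :: "'a graph \<Rightarrow> 'a set" where "verts F = fst F"
definition edges :: "'a graph \<Rightarrow> 'a set set" where "edges F = snd F"

definition wf_graph :: "'a graph \<Rightarrow> bool" where
  "wf_graph F \<longleftrightarrow> finite (verts F) \<and>
     (\<forall>e \<in> edges F. e \<subseteq> verts F \<and> card e = 2)"

definition adj :: "'a graph \<Rightarrow> 'a \<Rightarrow> 'a \<Rightarrow> bool" where
  "adj F u v \<longleftrightarrow> {u, v} \<in> edges F"

definition reach :: "'a graph \<Rightarrow> 'a \<Rightarrow> 'a \<Rightarrow> bool" where
  "reach F u v \<longleftrightarrow> u \<in> verts F \<and> (adj F)\<^sup>*\<^sup>* u v"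

definition connected_graph :: "'a graph \<Rightarrow> bool" where
  "connected_graph F \<longleftrightarrow> verts F \<noteq> {} \<and> (\<forall>u \<in> verts F. \<forall>v \<in> verts F. reach F u v)"

definition component :: "'a graph \<Rightarrow> 'a set \<Rightarrow> bool" where
  "component F C \<longleftrightarrow> (\<exists>v \<in> verts F. C = {w. reach F v w})"

text \<open>A copy of H in F, given by an injective homomorphism f; the copy is the
  subgraph with vertices f ` V(H) and edges (image f) ` E(H).\<close>
definition embedding :: "'b graph \<Rightarrow> 'a graph \<Rightarrow> ('b \<Rightarrow> 'a) \<Rightarrow> bool" where
  "embedding H F f \<longleftrightarrow> inj_on f (verts H) \<and> f ` verts H \<subseteq> verts F \<and>
     (\<forall>e \<in> edges H. f ` e \<in> edges F)"

definition bad_vertex :: "'b graph \<Rightarrow> 'a graph \<Rightarrow> 'a \<Rightarrow> bool" where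
  "bad_vertex H F v \<longleftrightarrow> v \<in> verts F \<and>
     \<not> (\<exists>f. embedding H F f \<and> v \<in> f ` verts H)"

definition bad_edge :: "'b graph \<Rightarrow> 'a graph \<Rightarrow> 'a set \<Rightarrow> bool" where
  "bad_edge H F e \<longleftrightarrow> e \<in> edges F \<and>
     \<not> (\<exists>f. embedding H F f \<and> e \<in> (\<lambda>x. f ` x) ` edges H)"

definition bad_set :: "'b graph \<Rightarrow> nat \<Rightarrow> 'a graph \<Rightarrow> 'a set \<Rightarrow> bool" where
  "bad_set H b F U \<longleftrightarrow> U \<subseteq> verts F \<and> 2 \<le> card U \<and> card U \<le> b + 1 \<and>
     \<not> (\<exists>f. embedding H F f \<and> card (f ` verts H \<inter> U) = 1)"

definition small_component :: "'b graph \<Rightarrow> nat \<Rightarrow> 'a graph \<Rightarrow> 'a set \<Rightarrow> bool" where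
  "small_component H b F C \<longleftrightarrow> component F C \<and>
     card C \<le> (b + 1) * (card (verts H) - 1)"

definition stable :: "'b graph \<Rightarrow> nat \<Rightarrow> 'a graph \<Rightarrow> bool" where
  "stable H b F \<longleftrightarrow> (\<nexists>v. bad_vertex H F v) \<and> (\<nexists>e. bad_edge H F e) \<and>
     (\<nexists>U. bad_set H b F U) \<and> (\<nexists>C. small_component H b F C)"

definition subgraph :: "'a graph \<Rightarrow> 'a graph \<Rightarrow> bool" where
  "subgraph F G \<longleftrightarrow> wf_graph F \<and> verts F \<subseteq> verts G \<and> edges F \<subseteq> edges G"

definition core :: "'b graph \<Rightarrow> nat \<Rightarrow> 'a graph \<Rightarrow> 'a graph" where
  "core H b G = (\<Union>{verts F | F. subgraph F G \<and> stable H b F},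
                 \<Union>{edges F | F. subgraph F G \<and> stable H b F})"

definition delete_verts :: "'a graph \<Rightarrow> 'a set \<Rightarrow> 'a graph" where
  "delete_verts F U = (verts F - U, {e \<in> edges F. e \<inter> U = {}})"

definition delete_edge :: "'a graph \<Rightarrow> 'a set \<Rightarrow> 'a graph" where
  "delete_edge F e = (verts F, edges F - {e})"

definition del_step :: "'b graph \<Rightarrow> nat \<Rightarrow> 'a graph \<Rightarrow> 'a graph \<Rightarrow> bool" where
  "del_step H b F F' \<longleftrightarrow>
     (\<exists>v. bad_vertex H F v \<and> F' = delete_verts F {v}) \<or>
     (\<exists>e. bad_edge H F e \<and> F' = delete_edge F e) \<or>
     (\<exists>U. bad_set H b F U \<and> F' = delete_verts F U) \<or>
     (\<exists>C. small_component H b F C \<and> F' = delete_verts F C)"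

end

theory Submission
  imports Defs
begin

text \<open>Every deletion step removes something, so the number of vertices plus edges strictly
  decreases and the algorithm terminates. A stable subgraph S of the current graph F never
  loses anything: a copy of H in S is a copy in F, so no vertex or edge of S is bad in F;
  a bad set meeting S in one vertex or in at least two vertices would yield a bad vertex or
  a bad set of S; and the component of F containing a vertex of S contains a whole component
  of S, which is not small. Hence every graph reached contains all stable subgraphs of G,
  and a terminal graph is itself stable, so it is the largest stable subgraph, the core.\<close>

definition graph_size :: "'a graph \<Rightarrow> nat" where
  "graph_size F = card (verts F) + card (edges F)"

lemma verts_delete_verts [simp]: "verts (delete_verts F U) = verts F - U"
  and edges_delete_verts [simp]: "edges (delete_verts F U) = {e \<in> edges F. e \<inter> U = {}}"
  and verts_delete_edge [simp]: "verts (delete_edge F e) = verts F"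
  and edges_delete_edge [simp]: "edges (delete_edge F e) = edges F - {e}"
  by (auto simp: delete_verts_def delete_edge_def verts_def edges_def)

lemma wf_graph_finite_edges: "wf_graph F \<Longrightarrow> finite (edges F)"
  unfolding wf_graph_def by (meson Pow_iff finite_Pow_iff finite_subset subsetI)

lemma wf_graph_edge_subset: "wf_graph F \<Longrightarrow> e \<in> edges F \<Longrightarrow> e \<subseteq> verts F"
  unfolding wf_graph_def by blast

lemma reach_in_verts:
  assumes "wf_graph F" "reach F v w"
  shows "w \<in> verts F"
proof -
  have "(adj F)\<^sup>*\<^sup>* v w" "v \<in> verts F" using assms(2) by (auto simp: reach_def)
  then show ?thesis
    by (induction rule: rtranclp_induct)
       (auto simp: adj_def dest: wf_graph_edge_subset[OF assms(1)])
qed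


lemma wf_graph_delete_verts: "wf_graph F \<Longrightarrow> wf_graph (delete_verts F U)"
  unfolding wf_graph_def by auto

lemma wf_graph_delete_edge: "wf_graph F \<Longrightarrow> wf_graph (delete_edge F e)"
  unfolding wf_graph_def by auto

lemma graph_size_delete_verts_less:
  assumes "wf_graph F" "U \<inter> verts F \<noteq> {}"
  shows "graph_size (delete_verts F U) < graph_size F"
proof -
  have "card (verts F - U) < card (verts F)"
    using assms by (intro psubset_card_mono) (auto simp: wf_graph_def)
  moreover have "card {e \<in> edges F. e \<inter> U = {}} \<le> card (edges F)"
    using wf_graph_finite_edges[OF assms(1)] by (intro card_mono) auto
  ultimately show ?thesis by (simp add: graph_size_def)
qed

lemma graph_size_delete_edge_less:
  assumes "wf_graph F" "e \<in> edges F"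
  shows "graph_size (delete_edge F e) < graph_size F"
proof -
  have "card (edges F - {e}) < card (edges F)"
    using assms wf_graph_finite_edges[OF assms(1)] by (rule_tac card_Diff1_less)
  then show ?thesis by (simp add: graph_size_def)
qed

lemma bad_set_nonempty: "bad_set H b F U \<Longrightarrow> U \<inter> verts F \<noteq> {}"
  unfolding bad_set_def by (metis card.empty inf.absorb_iff1 not_numeral_le_zero)

lemma small_component_nonempty:
  "small_component H b F C \<Longrightarrow> C \<inter> verts F \<noteq> {}"
  unfolding small_component_def component_def reach_def by auto

lemma del_step_wf_graph_size_less:
  assumes "wf_graph F" "del_step H b F F'"
  shows "wf_graph F' \<and> graph_size F' < graph_size F"
  using assms(2) unfolding del_step_def
proof (elim disjE exE conjE)
  fix v assume "bad_vertex H F v" "F' = delete_verts F {v}"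
  then show ?thesis using assms(1)
    by (auto simp: bad_vertex_def wf_graph_delete_verts intro: graph_size_delete_verts_less)
next
  fix e assume "bad_edge H F e" "F' = delete_edge F e"
  then show ?thesis using assms(1)
    by (auto simp: bad_edge_def wf_graph_delete_edge intro: graph_size_delete_edge_less)
next
  fix U assume "bad_set H b F U" "F' = delete_verts F U"
  then show ?thesis using assms(1) bad_set_nonempty[of H b F U]
    by (simp add: wf_graph_delete_verts graph_size_delete_verts_less)
next
  fix C assume "small_component H b F C" "F' = delete_verts F C"
  then show ?thesis using assms(1) small_component_nonempty[of H b F C]
    by (simp add: wf_graph_delete_verts graph_size_delete_verts_less)
qed

lemma del_step_subset:
  "del_step H b F F' \<Longrightarrow> verts F' \<subseteq> verts F \<and> edges F' \<subseteq> edges F"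
  unfolding del_step_def by auto

lemma no_infinite_del_step_chain:
  assumes "wf_graph (s 0)" "\<forall>i. del_step H b (s i) (s (Suc i))"
  shows False
proof -
  have wf_s: "wf_graph (s i)" for i
    by (induction i) (use assms del_step_wf_graph_size_less in blast)+
  have "(s (Suc i), s i) \<in> measure graph_size" for i
    using del_step_wf_graph_size_less[OF wf_s] assms(2) by (meson in_measure)
  then show False using wf_iff_no_infinite_down_chain wf_measure by blast
qed

lemma del_step_terminal_exists:
  "wf_graph F \<Longrightarrow> \<exists>F'. (del_step H b)\<^sup>*\<^sup>* F F' \<and> (\<nexists>F''. del_step H b F' F'')"
proof (induction "graph_size F" arbitrary: F rule: less_induct)
  case less
  show ?case
  proof (cases "\<exists>F''. del_step H b F F''")
    case True
    then obtain F'' where step: "del_step H b F F''" by blast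
    with less.prems have "wf_graph F''" "graph_size F'' < graph_size F"
      using del_step_wf_graph_size_less by blast+
    with less.hyps obtain F' where "(del_step H b)\<^sup>*\<^sup>* F'' F'" "\<nexists>F'''. del_step H b F' F'''"
      by blast
    with step show ?thesis by (meson converse_rtranclp_into_rtranclp)
  qed blast
qed


lemma embedding_mono:
  "embedding H S f \<Longrightarrow> verts S \<subseteq> verts F \<Longrightarrow> edges S \<subseteq> edges F \<Longrightarrow> embedding H F f"
  unfolding embedding_def by blast

lemma subgraph_delete_verts:
  "subgraph S F \<Longrightarrow> U \<inter> verts S = {} \<Longrightarrow> subgraph S (delete_verts F U)"
  unfolding subgraph_def wf_graph_def by auto

lemma bad_vertex_notin_stable_subgraph:
  assumes "subgraph S F" "stable H b S" "bad_vertex H F v"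
  shows "v \<notin> verts S"
  using assms embedding_mono unfolding subgraph_def stable_def bad_vertex_def by metis

lemma bad_edge_notin_stable_subgraph:
  assumes "subgraph S F" "stable H b S" "bad_edge H F e"
  shows "e \<notin> edges S"
  using assms embedding_mono unfolding subgraph_def stable_def bad_edge_def by metis

lemma bad_set_disjoint_stable_subgraph:
  assumes sub: "subgraph S F" and stable: "stable H b S" and bad: "bad_set H b F U"
  shows "U \<inter> verts S = {}"
proof (rule ccontr)
  assume meet: "U \<inter> verts S \<noteq> {}"
  have "finite U" using bad by (auto simp: bad_set_def intro: card_ge_0_finite)
  then have card_meet: "0 < card (U \<inter> verts S)" "card (U \<inter> verts S) \<le> b + 1"
    using meet bad card_mono[of U "U \<inter> verts S"] by (auto simp: bad_set_def)
  have "\<exists>f. embedding H S f \<and> card (f ` verts H \<inter> (U \<inter> verts S)) = 1"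
  proof (cases "card (U \<inter> verts S) = 1")
    case True
    then obtain u where u: "U \<inter> verts S = {u}" by (meson card_1_singletonE)
    then obtain f where "embedding H S f" "u \<in> f ` verts H"
      using stable unfolding stable_def bad_vertex_def by blast
    with u show ?thesis by (intro exI[of _ f]) auto
  next
    case False
    with card_meet stable show ?thesis
      unfolding stable_def bad_set_def by (metis Int_lower2 Suc_1 Suc_leI less_one nat_neq_iff)
  qed
  then obtain f where f: "embedding H S f" "card (f ` verts H \<inter> (U \<inter> verts S)) = 1"
    by blast
  then have "f ` verts H \<inter> (U \<inter> verts S) = f ` verts H \<inter> U"
    unfolding embedding_def by blast
  with f sub bad show False
    using embedding_mono unfolding subgraph_def bad_set_def by metis
qed

lemma reach_subgraph_mono:
  assumes "subgraph S F" "reach S v w"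
  shows "(adj F)\<^sup>*\<^sup>* v w"
proof -
  have "adj S x y \<Longrightarrow> adj F x y" for x y using assms(1) by (auto simp: subgraph_def adj_def)
  then show ?thesis using assms(2) unfolding reach_def by (metis rtranclp_mono predicate2I predicate2D)
qed

lemma small_component_disjoint_stable_subgraph:
  assumes wf: "wf_graph F" and sub: "subgraph S F" and stable: "stable H b S"
    and small: "small_component H b F C"
  shows "C \<inter> verts S = {}"
proof (rule ccontr)
  assume "C \<inter> verts S \<noteq> {}"
  then obtain v where v: "v \<in> C" "v \<in> verts S" by blast
  obtain v0 where v0: "v0 \<in> verts F" "C = {w. reach F v0 w}"
    using small by (auto simp: small_component_def component_def)
  have "finite C"
    using v0 reach_in_verts[OF wf] wf by (auto simp: wf_graph_def intro: finite_subset)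
  moreover have "{w. reach S v w} \<subseteq> C"
    using v v0 reach_subgraph_mono[OF sub] by (auto simp: reach_def intro: rtranclp_trans)
  ultimately have "card {w. reach S v w} \<le> card C" by (rule card_mono)
  moreover have "component S {w. reach S v w}" using v by (auto simp: component_def)
  ultimately show False
    using stable small unfolding stable_def small_component_def by auto
qed

lemma del_step_keeps_stable_subgraph:
  assumes wf: "wf_graph F" and sub: "subgraph S F" and stable: "stable H b S"
    and step: "del_step H b F F'"
  shows "subgraph S F'"
  using step unfolding del_step_def
proof (elim disjE exE conjE)
  fix v assume "bad_vertex H F v" "F' = delete_verts F {v}"
  then show ?thesis
    using bad_vertex_notin_stable_subgraph[OF sub stable] subgraph_delete_verts[OF sub] by auto
next
  fix e assume "bad_edge H F e" "F' = delete_edge F e"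
  then show ?thesis
    using bad_edge_notin_stable_subgraph[OF sub stable] sub by (auto simp: subgraph_def)
next
  fix U assume "bad_set H b F U" "F' = delete_verts F U"
  then show ?thesis
    using bad_set_disjoint_stable_subgraph[OF sub stable] subgraph_delete_verts[OF sub] by auto
next
  fix C assume "small_component H b F C" "F' = delete_verts F C"
  then show ?thesis
    using small_component_disjoint_stable_subgraph[OF wf sub stable]
      subgraph_delete_verts[OF sub] by auto
qed


lemma del_steps_invariant:
  assumes "(del_step H b)\<^sup>*\<^sup>* G F" "wf_graph G"
  shows "subgraph F G \<and> (\<forall>S. subgraph S G \<and> stable H b S \<longrightarrow> subgraph S F)"
  using assms
proof (induction rule: rtranclp_induct)
  case base
  then show ?case by (simp add: subgraph_def)
next
  case (step F F')
  then have "wf_graph F" by (simp add: subgraph_def)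
  with step show ?case
    using del_step_wf_graph_size_less del_step_subset del_step_keeps_stable_subgraph
    unfolding subgraph_def by (metis order_trans)
qed

lemma stable_if_terminal: "\<nexists>F'. del_step H b F F' \<Longrightarrow> stable H b F"
  unfolding stable_def del_step_def by blast

lemma core_eq_greatest_stable_subgraph:
  assumes "subgraph F G" "stable H b F"
    and "\<forall>S. subgraph S G \<and> stable H b S \<longrightarrow> subgraph S F"
  shows "core H b G = F"
proof -
  have "\<Union>{verts S | S. subgraph S G \<and> stable H b S} = verts F"
    and "\<Union>{edges S | S. subgraph S G \<and> stable H b S} = edges F"
    using assms unfolding subgraph_def by blast+
  then show ?thesis by (simp add: core_def verts_def edges_def)
qed

lemma terminal_del_steps_core:
  assumes "wf_graph G" "(del_step H b)\<^sup>*\<^sup>* G F" "\<nexists>F'. del_step H b F F'"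
  shows "core H b G = F" "stable H b F"
  using core_eq_greatest_stable_subgraph del_steps_invariant stable_if_terminal assms
  by blast+

theorem mainTheorem13:
  fixes G :: "'a graph" and H :: "'b graph" and b :: nat
  assumes "wf_graph G" and "wf_graph H" and "connected_graph H" and "0 < b"
  shows "(\<nexists>s. s 0 = G \<and> (\<forall>i. del_step H b (s i) (s (Suc i))))
       \<and> (\<forall>F. (del_step H b)\<^sup>*\<^sup>* G F \<and> (\<nexists>F'. del_step H b F F') \<longrightarrow> F = core H b G)
       \<and> stable H b (core H b G)"
proof (intro conjI)
  show "\<nexists>s. s 0 = G \<and> (\<forall>i. del_step H b (s i) (s (Suc i)))"
    using no_infinite_del_step_chain assms(1) by metis
  show "\<forall>F. (del_step H b)\<^sup>*\<^sup>* G F \<and> (\<nexists>F'. del_step H b F F') \<longrightarrow> F = core H b G"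
    using terminal_del_steps_core(1) assms(1) by metis
  obtain F where "(del_step H b)\<^sup>*\<^sup>* G F" "\<nexists>F'. del_step H b F F'"
    using del_step_terminal_exists[OF assms(1)] by blast
  then show "stable H b (core H b G)" using terminal_del_steps_core assms(1) by metis
qed

end
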